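(* Let $M$ be a monoid. Then $\mathfrak{L}(\mathrm{Val},\mathrm{CF},M^0)=\mathfrak{L}(\mathrm{Val},\mathrm{CF},M)$.
   Context: $M^0=M\cup\{0\}$ (with a new zero element adjoined) if $M$ has no zero element, and $M^0=M$ otherwise. A context-free valence grammar over a monoid $N$ is $(V,T,P,S,N)$ with nonterminals $V$, terminals $T$, start symbol $S$ and a finite set $P$ of rules $(A\to\alpha,n)$ with $A\in V$, $\alpha\in(V\cup T)^*$, $n\in N$. One step: $(w_1Aw_2,m)\Rightarrow(w_1\alpha w_2,mn)$ for a rule $(A\to\alpha,n)$. The generated language is $\{w\in T^*:(S,1)\Rightarrow^*(w,1)\}$. $\mathfrak{L}(\mathrm{Val},\mathrm{CF},N)$ is the family of languages generated by such grammars over $N$. *)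

theory Defs
  imports "HOL-Algebra.Group"
begin

text \<open>Grammar symbols: Inl A is a nonterminal, Inr a is a terminal.
  Nonterminals are taken from type nat (V is a finite set of them).\<close>

type_synonym ('n, 't) gsym = "'n + 't"

definition valence_cf_grammar ::
  "('m, 'b) monoid_scheme \<Rightarrow> 'n set \<Rightarrow> 't set \<Rightarrow> ('n \<times> ('n, 't) gsym list \<times> 'm) set \<Rightarrow> 'n \<Rightarrow> bool"
where
  "valence_cf_grammar N V T P S \<longleftrightarrow>
     finite V \<and> finite T \<and> finite P \<and> S \<in> V \<and>
     (\<forall>(A, \<alpha>, n) \<in> P. A \<in> V \<and> set \<alpha> \<subseteq> Inl ` V \<union> Inr ` T \<and> n \<in> carrier N)"

definition val_step ::
  "('m, 'b) monoid_scheme \<Rightarrow> ('n \<times> ('n, 't) gsym list \<times> 'm) set \<Rightarrow>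
   (('n, 't) gsym list \<times> 'm) \<Rightarrow> (('n, 't) gsym list \<times> 'm) \<Rightarrow> bool"
where
  "val_step N P c c' \<longleftrightarrow>
     (\<exists>w1 w2 A \<alpha> n. (A, \<alpha>, n) \<in> P \<and> fst c = w1 @ [Inl A] @ w2 \<and>
        fst c' = w1 @ \<alpha> @ w2 \<and> snd c' = snd c \<otimes>\<^bsub>N\<^esub> n)"

definition val_lang ::
  "('m, 'b) monoid_scheme \<Rightarrow> 't set \<Rightarrow> ('n \<times> ('n, 't) gsym list \<times> 'm) set \<Rightarrow> 'n \<Rightarrow> 't list set"
where
  "val_lang N T P S =
     {w \<in> lists T. (val_step N P)\<^sup>*\<^sup>* ([Inl S], \<one>\<^bsub>N\<^esub>) (map Inr w, \<one>\<^bsub>N\<^esub>)}"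

definition L_Val_CF :: "('m, 'b) monoid_scheme \<Rightarrow> 't list set set" where
  "L_Val_CF N = {L. \<exists>(V :: nat set) T P S. valence_cf_grammar N V T P S \<and> L = val_lang N T P S}"

definition has_zero :: "('m, 'b) monoid_scheme \<Rightarrow> bool" where
  "has_zero M \<longleftrightarrow> (\<exists>z \<in> carrier M. \<forall>x \<in> carrier M. z \<otimes>\<^bsub>M\<^esub> x = z \<and> x \<otimes>\<^bsub>M\<^esub> z = z)"

text \<open>M^0: M with a new zero (None) adjoined if M has no zero; otherwise an isomorphic copy of M.\<close>

definition adjoin_zero :: "('m, 'b) monoid_scheme \<Rightarrow> 'm option monoid" where
  "adjoin_zero M =
     (if has_zero M then
        \<lparr>carrier = Some ` carrier M,
         mult = (\<lambda>x y. Some (the x \<otimes>\<^bsub>M\<^esub> the y)),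
         one = Some \<one>\<^bsub>M\<^esub>\<rparr>
      else
        \<lparr>carrier = insert None (Some ` carrier M),
         mult = (\<lambda>x y. case (x, y) of (Some a, Some b) \<Rightarrow> Some (a \<otimes>\<^bsub>M\<^esub> b) | _ \<Rightarrow> None),
         one = Some \<one>\<^bsub>M\<^esub>\<rparr>)"

end

theory Submission
  imports Defs
begin

text \<open>A derivation of value \<one> over M^0 never applies a rule weighted by the adjoined zero:
  once the value is zero it stays zero, and zero differs from \<one>. Deleting the zero-weighted
  rules therefore leaves the language unchanged, and the rules that remain are rules over M.
  Conversely every grammar over M is a grammar over M^0 via the embedding Some.\<close>

lemma one_adjoin_zero [simp]: "\<one>\<^bsub>adjoin_zero M\<^esub> = Some \<one>\<^bsub>M\<^esub>"
  by (simp add: adjoin_zero_def)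

lemma mult_adjoin_zero_Some [simp]: "Some a \<otimes>\<^bsub>adjoin_zero M\<^esub> Some b = Some (a \<otimes>\<^bsub>M\<^esub> b)"
  by (simp add: adjoin_zero_def)

lemma Some_in_carrier_adjoin_zero_iff [simp]:
  "Some x \<in> carrier (adjoin_zero M) \<longleftrightarrow> x \<in> carrier M"
  by (auto simp add: adjoin_zero_def)

lemma None_in_carrier_adjoin_zero_imp: "None \<in> carrier (adjoin_zero M) \<Longrightarrow> \<not> has_zero M"
  by (auto simp add: adjoin_zero_def split: if_splits)

lemma mult_adjoin_zero_eq_None_imp: "x \<otimes>\<^bsub>adjoin_zero M\<^esub> y = None \<Longrightarrow> \<not> has_zero M"
  by (auto simp add: adjoin_zero_def split: if_splits)

lemma mult_adjoin_zero_None_left [simp]: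
  "\<not> has_zero M \<Longrightarrow> None \<otimes>\<^bsub>adjoin_zero M\<^esub> y = None"
  by (simp add: adjoin_zero_def)

lemma mult_adjoin_zero_None_right [simp]:
  "\<not> has_zero M \<Longrightarrow> x \<otimes>\<^bsub>adjoin_zero M\<^esub> None = None"
  by (cases x) (simp_all add: adjoin_zero_def)

definition lift_rule :: "'n \<times> 's \<times> 'm \<Rightarrow> 'n \<times> 's \<times> 'm option" where
  "lift_rule = (\<lambda>(A, \<alpha>, k). (A, \<alpha>, Some k))"

lemma lift_rule_simp [simp]: "lift_rule (A, \<alpha>, k) = (A, \<alpha>, Some k)"
  by (simp add: lift_rule_def)

lemma inj_lift_rule: "inj lift_rule"
  by (auto simp add: lift_rule_def inj_def)

lemma val_step_adjoin_zero_Some_iff: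
  assumes "\<And>A \<alpha> n. (A, \<alpha>, n) \<in> P' \<Longrightarrow> n \<in> carrier (adjoin_zero M)"
  shows "val_step (adjoin_zero M) P' (w, Some m) (w', Some m') \<longleftrightarrow>
         val_step M (lift_rule -` P') (w, m) (w', m')"
proof
  assume "val_step (adjoin_zero M) P' (w, Some m) (w', Some m')"
  then obtain w1 w2 A \<alpha> n where rule: "(A, \<alpha>, n) \<in> P'" and "w = w1 @ [Inl A] @ w2"
      and "w' = w1 @ \<alpha> @ w2" and weight: "Some m' = Some m \<otimes>\<^bsub>adjoin_zero M\<^esub> n"
    by (auto simp: val_step_def)
  moreover obtain k where "n = Some k"
  proof (cases n)
    case None
    with rule assms have "\<not> has_zero M" by (blast dest: None_in_carrier_adjoin_zero_imp)
    with weight None show ?thesis by simp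
  qed
  ultimately show "val_step M (lift_rule -` P') (w, m) (w', m')"
    unfolding val_step_def by (simp; blast)
next
  assume "val_step M (lift_rule -` P') (w, m) (w', m')"
  then show "val_step (adjoin_zero M) P' (w, Some m) (w', Some m')"
    unfolding val_step_def by fastforce
qed

lemma rtranclp_val_step_adjoin_zero_None:
  assumes "(val_step (adjoin_zero M) P')\<^sup>*\<^sup>* c d" and "\<not> has_zero M" and "snd c = None"
  shows "snd d = None"
  using assms(1,3)
  by (induction rule: rtranclp_induct) (auto simp: val_step_def assms(2))

lemma rtranclp_val_step_adjoin_zero_Some_iff:
  assumes carrier: "\<And>A \<alpha> n. (A, \<alpha>, n) \<in> P' \<Longrightarrow> n \<in> carrier (adjoin_zero M)"
  shows "(val_step (adjoin_zero M) P')\<^sup>*\<^sup>* (w, Some m) (w', Some m') \<longleftrightarrow>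
         (val_step M (lift_rule -` P'))\<^sup>*\<^sup>* (w, m) (w', m')"
proof
  show "(val_step (adjoin_zero M) P')\<^sup>*\<^sup>* (w, Some m) (w', Some m') \<Longrightarrow>
        (val_step M (lift_rule -` P'))\<^sup>*\<^sup>* (w, m) (w', m')"
  proof (induction "(w, Some m)" arbitrary: w m rule: converse_rtranclp_induct)
    case base
    then show ?case by simp
  next
    case (step z)
    show ?case
    proof (cases "snd z")
      case None
      with step.hyps(1) have "\<not> has_zero M"
        by (auto simp: val_step_def dest: sym[THEN mult_adjoin_zero_eq_None_imp])
      from rtranclp_val_step_adjoin_zero_None[OF step.hyps(2) this None] show ?thesis
        by simp
    next
      case (Some k)
      then obtain u where z: "z = (u, Some k)"
        by (cases z) simp
      have "val_step M (lift_rule -` P') (w, m) (u, k)"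
        using step.hyps(1) z val_step_adjoin_zero_Some_iff[of P' M, OF carrier] by simp
      moreover have "(val_step M (lift_rule -` P'))\<^sup>*\<^sup>* (u, k) (w', m')"
        using step.hyps(3) z by simp
      ultimately show ?thesis
        by (rule converse_rtranclp_into_rtranclp)
    qed
  qed
next
  show "(val_step M (lift_rule -` P'))\<^sup>*\<^sup>* (w, m) (w', m') \<Longrightarrow>
        (val_step (adjoin_zero M) P')\<^sup>*\<^sup>* (w, Some m) (w', Some m')"
  proof (induction rule: rtranclp_induct2)
    case (step u k u' k')
    have "val_step (adjoin_zero M) P' (u, Some k) (u', Some k')"
      using step.hyps(2) val_step_adjoin_zero_Some_iff[of P' M, OF carrier] by simp
    with step.IH show ?case
      by (rule rtranclp.rtrancl_into_rtrancl)
  qed simp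
qed

lemma val_lang_adjoin_zero:
  assumes "\<And>A \<alpha> n. (A, \<alpha>, n) \<in> P' \<Longrightarrow> n \<in> carrier (adjoin_zero M)"
  shows "val_lang (adjoin_zero M) T P' S = val_lang M T (lift_rule -` P') S"
  by (simp add: val_lang_def rtranclp_val_step_adjoin_zero_Some_iff[OF assms])

lemma valence_cf_grammar_unlift:
  assumes "valence_cf_grammar (adjoin_zero M) V T P' S"
  shows "valence_cf_grammar M V T (lift_rule -` P') S"
proof -
  have "finite P'"
    using assms by (simp add: valence_cf_grammar_def)
  then have "finite (lift_rule -` P')"
    using inj_lift_rule by (rule finite_vimageI)
  moreover have "A \<in> V \<and> set \<alpha> \<subseteq> Inl ` V \<union> Inr ` T \<and> k \<in> carrier M"
    if "(A, \<alpha>, k) \<in> lift_rule -` P'" for A \<alpha> k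
    using assms that unfolding valence_cf_grammar_def by fastforce
  ultimately show ?thesis
    using assms unfolding valence_cf_grammar_def by blast
qed

lemma valence_cf_grammar_lift:
  assumes "valence_cf_grammar M V T P S"
  shows "valence_cf_grammar (adjoin_zero M) V T (lift_rule ` P) S"
  using assms unfolding valence_cf_grammar_def by (auto 0 3)

theorem proposition4:
  fixes M :: "'m monoid"
  assumes "monoid M"
  shows "(L_Val_CF (adjoin_zero M) :: 't list set set) = L_Val_CF M"
proof (intro equalityI subsetI)
  fix L :: "'t list set"
  assume "L \<in> L_Val_CF (adjoin_zero M)"
  then obtain V :: "nat set" and T P' S where g: "valence_cf_grammar (adjoin_zero M) V T P' S"
    and "L = val_lang (adjoin_zero M) T P' S" unfolding L_Val_CF_def by blast
  moreover have "val_lang (adjoin_zero M) T P' S = val_lang M T (lift_rule -` P') S"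
    using g by (intro val_lang_adjoin_zero) (auto simp: valence_cf_grammar_def)
  ultimately show "L \<in> L_Val_CF M"
    unfolding L_Val_CF_def using valence_cf_grammar_unlift[OF g] by blast
next
  fix L :: "'t list set"
  assume "L \<in> L_Val_CF M"
  then obtain V :: "nat set" and T P S where g: "valence_cf_grammar M V T P S"
    and "L = val_lang M T P S" unfolding L_Val_CF_def by blast
  moreover have "val_lang (adjoin_zero M) T (lift_rule ` P) S = val_lang M T P S"
    using valence_cf_grammar_lift[OF g]
    by (subst val_lang_adjoin_zero) (auto simp: valence_cf_grammar_def inj_vimage_image_eq inj_lift_rule)
  ultimately show "L \<in> L_Val_CF (adjoin_zero M)"
    unfolding L_Val_CF_def using valence_cf_grammar_lift[OF g] by blast
qed

end
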